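(* Let $B$ be a connected bipartite graph with parts $X$ and $Y$, and let $B'$ be the graph obtained from $B$ by adding three new vertices $x,z,y$ forming a path $xzy$, and making $x$ adjacent to every vertex of $X$ and $y$ adjacent to every vertex of $Y$. Then for every positive integer $d$, $B$ has boxicity at most $d$ if and only if $B'$ belongs to $(d+1)$-CBU.
   Context: The boxicity of a graph is the minimum $b$ such that the graph is the intersection graph of axis-parallel boxes in $\mathbb{R}^b$. Let $e_1,\ldots,e_k$ be the standard basis of $\mathbb{R}^k$. For $k\ge 1$, a graph belongs to $k$-CBU if one can assign to each vertex an axis-parallel box (product of $k$ closed intervals of positive length) in $\mathbb{R}^k$ such that the boxes have pairwise disjoint interiors, two distinct vertices are adjacent iff their boxes intersect, and any two intersecting boxes intersect in a $(k-1)$-dimensional box orthogonal to $e_1$. *)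

theory Defs
  imports Complex_Main
begin

definition graph :: "'a set \<Rightarrow> ('a \<Rightarrow> 'a \<Rightarrow> bool) \<Rightarrow> bool" where
  "graph V E \<longleftrightarrow> (\<forall>u v. E u v \<longrightarrow> u \<in> V \<and> v \<in> V \<and> u \<noteq> v \<and> E v u)"

definition connected_graph :: "'a set \<Rightarrow> ('a \<Rightarrow> 'a \<Rightarrow> bool) \<Rightarrow> bool" where
  "connected_graph V E \<longleftrightarrow> V \<noteq> {} \<and> (\<forall>u\<in>V. \<forall>v\<in>V. E\<^sup>*\<^sup>* u v)"

definition bipartite_parts :: "'a set \<Rightarrow> ('a \<Rightarrow> 'a \<Rightarrow> bool) \<Rightarrow> 'a set \<Rightarrow> 'a set \<Rightarrow> bool" where
  "bipartite_parts V E X Y \<longleftrightarrow> X \<union> Y = V \<and> X \<inter> Y = {} \<and>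
     (\<forall>u v. E u v \<longrightarrow> (u \<in> X \<and> v \<in> Y) \<or> (u \<in> Y \<and> v \<in> X))"

text \<open>Points of R^k are functions nat => real vanishing at coordinates >= k;
  coordinate 0 corresponds to e_1.\<close>
definition rbox :: "nat \<Rightarrow> (nat \<Rightarrow> real) \<Rightarrow> (nat \<Rightarrow> real) \<Rightarrow> (nat \<Rightarrow> real) set" where
  "rbox k lo hi = {p. (\<forall>i<k. lo i \<le> p i \<and> p i \<le> hi i) \<and> (\<forall>i\<ge>k. p i = 0)}"

definition rbox_interior :: "nat \<Rightarrow> (nat \<Rightarrow> real) \<Rightarrow> (nat \<Rightarrow> real) \<Rightarrow> (nat \<Rightarrow> real) set" where
  "rbox_interior k lo hi = {p. (\<forall>i<k. lo i < p i \<and> p i < hi i) \<and> (\<forall>i\<ge>k. p i = 0)}"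

definition box_rep :: "nat \<Rightarrow> 'a set \<Rightarrow> ('a \<Rightarrow> 'a \<Rightarrow> bool) \<Rightarrow> ('a \<Rightarrow> nat \<Rightarrow> real) \<Rightarrow> ('a \<Rightarrow> nat \<Rightarrow> real) \<Rightarrow> bool" where
  "box_rep k V E lo hi \<longleftrightarrow> (\<forall>v\<in>V. \<forall>i<k. lo v i \<le> hi v i) \<and>
     (\<forall>u\<in>V. \<forall>v\<in>V. u \<noteq> v \<longrightarrow> (E u v \<longleftrightarrow> rbox k (lo u) (hi u) \<inter> rbox k (lo v) (hi v) \<noteq> {}))"

definition boxicity :: "'a set \<Rightarrow> ('a \<Rightarrow> 'a \<Rightarrow> bool) \<Rightarrow> nat" where
  "boxicity V E = (LEAST b. \<exists>lo hi. box_rep b V E lo hi)"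

definition CBU :: "nat \<Rightarrow> 'a set \<Rightarrow> ('a \<Rightarrow> 'a \<Rightarrow> bool) \<Rightarrow> bool" where
  "CBU k V E \<longleftrightarrow> (\<exists>lo hi.
     (\<forall>v\<in>V. \<forall>i<k. lo v i < hi v i) \<and>
     (\<forall>u\<in>V. \<forall>v\<in>V. u \<noteq> v \<longrightarrow> rbox_interior k (lo u) (hi u) \<inter> rbox_interior k (lo v) (hi v) = {}) \<and>
     (\<forall>u\<in>V. \<forall>v\<in>V. u \<noteq> v \<longrightarrow> (E u v \<longleftrightarrow> rbox k (lo u) (hi u) \<inter> rbox k (lo v) (hi v) \<noteq> {})) \<and>
     (\<forall>u\<in>V. \<forall>v\<in>V. u \<noteq> v \<longrightarrow> rbox k (lo u) (hi u) \<inter> rbox k (lo v) (hi v) \<noteq> {} \<longrightarrow>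
        (\<exists>lo' hi'. lo' 0 = hi' 0 \<and> (\<forall>i. 0 < i \<and> i < k \<longrightarrow> lo' i < hi' i) \<and>
           rbox k (lo u) (hi u) \<inter> rbox k (lo v) (hi v) = rbox k lo' hi')))"

datatype 'a ext = Old 'a | NX | NZ | NY

definition ext_V :: "'a set \<Rightarrow> 'a ext set" where
  "ext_V V = Old ` V \<union> {NX, NZ, NY}"

definition ext_E :: "'a set \<Rightarrow> 'a set \<Rightarrow> ('a \<Rightarrow> 'a \<Rightarrow> bool) \<Rightarrow> 'a ext \<Rightarrow> 'a ext \<Rightarrow> bool" where
  "ext_E X Y E a b \<longleftrightarrow> (\<exists>u v. a = Old u \<and> b = Old v \<and> E u v) \<or>
     {a, b} = {NX, NZ} \<or> {a, b} = {NZ, NY} \<or>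
     (\<exists>u\<in>X. {a, b} = {NX, Old u}) \<or> (\<exists>u\<in>Y. {a, b} = {NY, Old u})"

end

theory Submission
  imports Defs
begin

(* If B has a box representation in R^d, thicken it slightly so that adjacent boxes overlap in
   every coordinate and non-adjacent ones are strictly apart, and prepend a coordinate in which
   X gets [0, 1], Y gets [1, 2], x gets [-1, 0], y gets [2, 3] and z gets [0, 2]: the edges of B'
   become contacts orthogonal to e_1, and z is moved off the old boxes in the second coordinate.
   Conversely, in a (d+1)-CBU representation of B' adjacent boxes touch in the first coordinate.
   The path x z y prevents a vertex of B from being touched by neighbours on both sides there, so
   each vertex touches all its neighbours at one endpoint; adjacent vertices share this point, so
   by connectivity it lies in all first-coordinate intervals of B, and dropping the first
   coordinate leaves a box representation of B in R^d. *)

lemma rbox_Int: "rbox k a b \<inter> rbox k c e = rbox k (\<lambda>i. max (a i) (c i)) (\<lambda>i. min (b i) (e i))"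
  by (auto simp: rbox_def)

lemma rbox_eq_empty_iff: "rbox k a b = {} \<longleftrightarrow> (\<exists>i<k. b i < a i)"
proof
  assume "rbox k a b = {}"
  then have "(\<lambda>i. if i < k then a i else 0) \<notin> rbox k a b" by blast
  then show "\<exists>i<k. b i < a i" by (auto simp: rbox_def not_le)
qed (force simp: rbox_def)

lemma rbox_Int_nonempty_iff:
  "rbox k a b \<inter> rbox k c e \<noteq> {} \<longleftrightarrow> (\<forall>i<k. max (a i) (c i) \<le> min (b i) (e i))"
  unfolding rbox_Int rbox_eq_empty_iff by (meson not_less)

lemma rbox_eq_rboxD:
  assumes eq: "rbox k a b = rbox k a' b'" and ne: "rbox k a b \<noteq> {}" and i: "i < k"
  shows "a' i = a i" "b' i = b i"
proof -
  obtain p where p: "p \<in> rbox k a b" using ne by blast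
  have le: "\<forall>j<k. a j \<le> b j" "\<forall>j<k. a' j \<le> b' j"
    using ne ne[unfolded eq] unfolding rbox_eq_empty_iff by (meson not_less)+
  have "p(i := t) \<in> rbox k a b \<longleftrightarrow> a i \<le> t \<and> t \<le> b i" for t
    using p i by (auto simp: rbox_def)
  moreover have "p(i := t) \<in> rbox k a' b' \<longleftrightarrow> a' i \<le> t \<and> t \<le> b' i" for t
    using p i eq by (auto simp: rbox_def)
  ultimately have "a i \<le> t \<and> t \<le> b i \<longleftrightarrow> a' i \<le> t \<and> t \<le> b' i" for t
    using eq by simp
  from this[of "a i"] this[of "a' i"] this[of "b i"] this[of "b' i"] show "a' i = a i" "b' i = b i"
    using le i by force+
qed

lemma rbox_interior_Int_eq_empty:
  assumes "i < k" "b i \<le> c i"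
  shows "rbox_interior k a b \<inter> rbox_interior k c e = {}"
  using assms by (force simp: rbox_interior_def)

lemma ex_box_rep_card:
  assumes "finite V" and g: "graph V E"
  shows "\<exists>lo hi. box_rep (card V) V E lo hi"
proof -
  obtain f where f: "bij_betw f {0..<card V} V" using ex_bij_betw_nat_finite[OF \<open>finite V\<close>] by blast
  define lo :: "'a \<Rightarrow> nat \<Rightarrow> real" where "lo v i = (if v = f i \<or> E v (f i) then 0 else 1)" for v i
  define hi :: "'a \<Rightarrow> nat \<Rightarrow> real" where "hi v i = (if v = f i then 0 else 1)" for v i
  have sym: "E u v \<Longrightarrow> E v u" for u v using g unfolding graph_def by blast
  have "box_rep (card V) V E lo hi"
    unfolding box_rep_def rbox_Int_nonempty_iff
  proof (intro conjI ballI allI impI)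
    fix v i show "lo v i \<le> hi v i" by (simp add: lo_def hi_def)
  next
    fix u v assume uv: "u \<in> V" "v \<in> V" "u \<noteq> v"
    show "E u v \<longleftrightarrow> (\<forall>i<card V. max (lo u i) (lo v i) \<le> min (hi u i) (hi v i))"
    proof
      assume "E u v"
      then show "\<forall>i<card V. max (lo u i) (lo v i) \<le> min (hi u i) (hi v i)"
        using sym[of u v] uv by (auto simp: lo_def hi_def)
    next
      assume h: "\<forall>i<card V. max (lo u i) (lo v i) \<le> min (hi u i) (hi v i)"
      obtain i where i: "i < card V" "f i = u" using f uv unfolding bij_betw_def by force
      from h[rule_format, OF i(1)] i uv have "E v u" by (auto simp: lo_def hi_def split: if_splits)
      then show "E u v" by (rule sym)
    qed
  qed
  then show ?thesis by blast
qed

lemma box_rep_pad: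
  assumes "box_rep b V E lo hi" "b \<le> d"
  shows "box_rep d V E (\<lambda>v i. if i < b then lo v i else 0) (\<lambda>v i. if i < b then hi v i else 0)"
proof -
  have "(\<forall>i<d. max (if i < b then lo u i else 0) (if i < b then lo v i else 0)
      \<le> min (if i < b then hi u i else 0) (if i < b then hi v i else 0)) \<longleftrightarrow>
      (\<forall>i<b. max (lo u i) (lo v i) \<le> min (hi u i) (hi v i))" for u v
    using assms(2) by (auto split: if_splits)
  then show ?thesis using assms(1) unfolding box_rep_def rbox_Int_nonempty_iff by auto
qed

lemma box_rep_drop_coord_0:
  assumes rep: "box_rep (Suc d) V E lo hi" and common: "\<forall>v\<in>V. lo v 0 \<le> \<gamma> \<and> \<gamma> \<le> hi v 0"
  shows "box_rep d V E (\<lambda>v i. lo v (Suc i)) (\<lambda>v i. hi v (Suc i))"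
  unfolding box_rep_def rbox_Int_nonempty_iff
proof (intro conjI ballI allI impI)
  fix v i assume "v \<in> V" "i < d"
  then show "lo v (Suc i) \<le> hi v (Suc i)" using rep unfolding box_rep_def by simp
next
  fix u v assume uv: "u \<in> V" "v \<in> V" "u \<noteq> v"
  have "lo u 0 \<le> \<gamma>" "\<gamma> \<le> hi u 0" "lo v 0 \<le> \<gamma>" "\<gamma> \<le> hi v 0" using common uv by auto
  then have "max (lo u 0) (lo v 0) \<le> min (hi u 0) (hi v 0)" by simp
  moreover have "E u v \<longleftrightarrow> (\<forall>i<Suc d. max (lo u i) (lo v i) \<le> min (hi u i) (hi v i))"
    using rep uv unfolding box_rep_def rbox_Int_nonempty_iff by blast
  ultimately show "E u v \<longleftrightarrow> (\<forall>i<d. max (lo u (Suc i)) (lo v (Suc i)) \<le> min (hi u (Suc i)) (hi v (Suc i)))"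
    unfolding All_less_Suc2 by blast
qed

definition strict_box_rep :: "nat \<Rightarrow> 'a set \<Rightarrow> ('a \<Rightarrow> 'a \<Rightarrow> bool) \<Rightarrow>
    ('a \<Rightarrow> nat \<Rightarrow> real) \<Rightarrow> ('a \<Rightarrow> nat \<Rightarrow> real) \<Rightarrow> bool" where
  "strict_box_rep k V E lo hi \<longleftrightarrow> (\<forall>v\<in>V. \<forall>i<k. lo v i < hi v i) \<and>
     (\<forall>u\<in>V. \<forall>v\<in>V. u \<noteq> v \<longrightarrow> E u v \<longrightarrow> (\<forall>i<k. lo u i < hi v i)) \<and>
     (\<forall>u\<in>V. \<forall>v\<in>V. u \<noteq> v \<longrightarrow> \<not> E u v \<longrightarrow> (\<exists>i<k. hi u i < lo v i \<or> hi v i < lo u i))"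

lemma strict_box_rep_if_box_rep:
  assumes "finite V" and rep: "box_rep k V E L H"
  shows "\<exists>lo hi. strict_box_rep k V E lo hi"
proof -
  have half_gap: "\<forall>\<^sub>F \<epsilon> in at_right 0. 2 * \<epsilon> < g" if "0 < g" for g :: real
    unfolding eventually_at_right_field using that by (intro exI[of _ "g / 2"]) auto
  have "\<forall>\<^sub>F \<epsilon> in at_right 0.
      \<forall>u\<in>V. \<forall>v\<in>V. \<forall>i\<in>{..<k}. H u i < L v i \<longrightarrow> 2 * \<epsilon> < L v i - H u i"
    using \<open>finite V\<close> half_gap
    by (intro eventually_ball_finite ballI finite_lessThan) (auto intro: eventually_mono)
  with eventually_at_right_less have "\<forall>\<^sub>F \<epsilon> in at_right 0. 0 < \<epsilon> \<and>
      (\<forall>u\<in>V. \<forall>v\<in>V. \<forall>i\<in>{..<k}. H u i < L v i \<longrightarrow> 2 * \<epsilon> < L v i - H u i)"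
    by (rule eventually_conj)
  then obtain \<epsilon> :: real where "0 < \<epsilon>"
    and gap: "\<And>u v i. u \<in> V \<Longrightarrow> v \<in> V \<Longrightarrow> i < k \<Longrightarrow> H u i < L v i \<Longrightarrow> 2 * \<epsilon> < L v i - H u i"
    by (auto dest: eventually_happens'[OF trivial_limit_at_right_real])
  have LH: "\<forall>v\<in>V. \<forall>i<k. L v i \<le> H v i"
    and adj: "\<forall>u\<in>V. \<forall>v\<in>V. u \<noteq> v \<longrightarrow> (E u v \<longleftrightarrow> (\<forall>i<k. max (L u i) (L v i) \<le> min (H u i) (H v i)))"
    using rep unfolding box_rep_def rbox_Int_nonempty_iff by blast+
  have "strict_box_rep k V E (\<lambda>v i. L v i - \<epsilon>) (\<lambda>v i. H v i + \<epsilon>)"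
    unfolding strict_box_rep_def
  proof (intro conjI ballI allI impI)
    fix v i assume "v \<in> V" "i < k"
    then show "L v i - \<epsilon> < H v i + \<epsilon>" using LH \<open>0 < \<epsilon>\<close> by force
  next
    fix u v i assume "u \<in> V" "v \<in> V" "u \<noteq> v" "E u v" "i < k"
    then show "L u i - \<epsilon> < H v i + \<epsilon>" using adj \<open>0 < \<epsilon>\<close> by force
  next
    fix u v assume uv: "u \<in> V" "v \<in> V" "u \<noteq> v" "\<not> E u v"
    then obtain i where i: "i < k" "\<not> max (L u i) (L v i) \<le> min (H u i) (H v i)" using adj by blast
    then have "H u i < L v i \<or> H v i < L u i" using LH uv by (auto simp: max_def min_def split: if_splits)
    then show "\<exists>i<k. H u i + \<epsilon> < L v i - \<epsilon> \<or> H v i + \<epsilon> < L u i - \<epsilon>"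
      using gap[of u v i] gap[of v u i] uv i by force
  qed
  then show ?thesis by blast
qed

lemma strict_box_rep_strict_mono:
  assumes "strict_box_rep k V E lo hi" and "strict_mono f"
  shows "strict_box_rep k V E (\<lambda>v i. f (lo v i)) (\<lambda>v i. f (hi v i))"
  using assms unfolding strict_box_rep_def by (simp add: strict_mono_less)

lemma strict_box_rep_bounded:
  assumes "strict_box_rep k V E lo hi"
  shows "\<exists>lo hi. strict_box_rep k V E lo hi \<and> (\<forall>v i. lo v i \<in> {-2<..<2} \<and> hi v i \<in> {-2<..<2})"
proof -
  have "strict_mono arctan" by (simp add: strict_mono_def arctan_less_iff)
  moreover have "arctan x \<in> {-2<..<2}" for x
    using arctan_bounded[of x] pi_less_4 by simp
  ultimately show ?thesis using strict_box_rep_strict_mono[OF assms] by blast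
qed

definition cbu_rep :: "nat \<Rightarrow> 'a set \<Rightarrow> ('a \<Rightarrow> 'a \<Rightarrow> bool) \<Rightarrow>
    ('a \<Rightarrow> nat \<Rightarrow> real) \<Rightarrow> ('a \<Rightarrow> nat \<Rightarrow> real) \<Rightarrow> bool" where
  "cbu_rep k V E lo hi \<longleftrightarrow>
     (\<forall>v\<in>V. \<forall>i<k. lo v i < hi v i) \<and>
     (\<forall>u\<in>V. \<forall>v\<in>V. u \<noteq> v \<longrightarrow> rbox_interior k (lo u) (hi u) \<inter> rbox_interior k (lo v) (hi v) = {}) \<and>
     (\<forall>u\<in>V. \<forall>v\<in>V. u \<noteq> v \<longrightarrow> (E u v \<longleftrightarrow> rbox k (lo u) (hi u) \<inter> rbox k (lo v) (hi v) \<noteq> {})) \<and>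
     (\<forall>u\<in>V. \<forall>v\<in>V. u \<noteq> v \<longrightarrow> rbox k (lo u) (hi u) \<inter> rbox k (lo v) (hi v) \<noteq> {} \<longrightarrow>
        (\<exists>lo' hi'. lo' 0 = hi' 0 \<and> (\<forall>i. 0 < i \<and> i < k \<longrightarrow> lo' i < hi' i) \<and>
           rbox k (lo u) (hi u) \<inter> rbox k (lo v) (hi v) = rbox k lo' hi'))"

lemma CBU_iff_cbu_rep: "CBU k V E \<longleftrightarrow> (\<exists>lo hi. cbu_rep k V E lo hi)"
  unfolding CBU_def cbu_rep_def ..

lemma cbu_rep_touch_0:
  assumes rep: "cbu_rep k V E lo hi" and "0 < k" and uv: "u \<in> V" "v \<in> V" "u \<noteq> v" "E u v"
  shows "hi u 0 = lo v 0 \<or> hi v 0 = lo u 0"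
proof -
  have ne: "rbox k (lo u) (hi u) \<inter> rbox k (lo v) (hi v) \<noteq> {}"
    using rep uv unfolding cbu_rep_def by blast
  then obtain lo' hi' where flat: "lo' 0 = hi' 0"
    and eq: "rbox k (\<lambda>i. max (lo u i) (lo v i)) (\<lambda>i. min (hi u i) (hi v i)) = rbox k lo' hi'"
    using rep uv unfolding cbu_rep_def rbox_Int by blast
  have "max (lo u 0) (lo v 0) = min (hi u 0) (hi v 0)"
    using rbox_eq_rboxD[OF eq ne[unfolded rbox_Int] \<open>0 < k\<close>] flat by simp
  moreover have "lo u 0 < hi u 0" "lo v 0 < hi v 0"
    using rep uv \<open>0 < k\<close> unfolding cbu_rep_def by auto
  ultimately show ?thesis by (simp add: max_def min_def split: if_splits)
qed

lemma cbu_repI: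
  assumes "0 < k"
    and pos: "\<And>p i. p \<in> W \<Longrightarrow> i < k \<Longrightarrow> lo p i < hi p i"
    and apart: "\<And>p q. p \<in> W \<Longrightarrow> q \<in> W \<Longrightarrow> p \<noteq> q \<Longrightarrow> \<not> R p q \<Longrightarrow>
      \<exists>i<k. hi p i < lo q i \<or> hi q i < lo p i"
    and touch: "\<And>p q. p \<in> W \<Longrightarrow> q \<in> W \<Longrightarrow> p \<noteq> q \<Longrightarrow> R p q \<Longrightarrow>
      hi p 0 = lo q 0 \<or> hi q 0 = lo p 0"
    and overlap: "\<And>p q i. p \<in> W \<Longrightarrow> q \<in> W \<Longrightarrow> p \<noteq> q \<Longrightarrow> R p q \<Longrightarrow> 0 < i \<Longrightarrow> i < k \<Longrightarrow>
      lo p i < hi q i \<and> lo q i < hi p i"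
  shows "cbu_rep k W R lo hi"
  unfolding cbu_rep_def
proof (intro conjI ballI allI impI)
  fix p i assume "p \<in> W" "i < k"
  then show "lo p i < hi p i" by (rule pos)
next
  fix p q assume pq: "p \<in> W" "q \<in> W" "p \<noteq> q"
  obtain i where "i < k" and sep: "hi p i \<le> lo q i \<or> hi q i \<le> lo p i"
  proof (cases "R p q")
    case True
    then show thesis using that[of 0] touch[OF pq] \<open>0 < k\<close> by force
  next
    case False
    then show thesis using that apart[OF pq] by (meson less_imp_le)
  qed
  then show "rbox_interior k (lo p) (hi p) \<inter> rbox_interior k (lo q) (hi q) = {}"
    using rbox_interior_Int_eq_empty[of i k "hi p" "lo q" "lo p" "hi q"]
      rbox_interior_Int_eq_empty[of i k "hi q" "lo p" "lo q" "hi p"] by blast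
  have flat: "max (lo p 0) (lo q 0) = min (hi p 0) (hi q 0)" if "R p q"
    using touch[OF pq that] pos[OF pq(1) \<open>0 < k\<close>] pos[OF pq(2) \<open>0 < k\<close>]
    by (auto simp: max_def min_def)
  have contact: "max (lo p i) (lo q i) \<le> min (hi p i) (hi q i)" if "R p q" "i < k" for i
    using flat overlap[OF pq that(1) _ that(2)] pos[OF pq(1) that(2)] pos[OF pq(2) that(2)] that(1)
    by (cases "i = 0") (simp_all add: less_imp_le)
  have adjacent_iff: "R p q \<longleftrightarrow> (\<forall>i<k. max (lo p i) (lo q i) \<le> min (hi p i) (hi q i))"
    using apart[OF pq] contact by fastforce
  then show "R p q \<longleftrightarrow> rbox k (lo p) (hi p) \<inter> rbox k (lo q) (hi q) \<noteq> {}"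
    unfolding rbox_Int_nonempty_iff .
  assume "rbox k (lo p) (hi p) \<inter> rbox k (lo q) (hi q) \<noteq> {}"
  with adjacent_iff have "R p q" unfolding rbox_Int_nonempty_iff by blast
  then show "\<exists>lo' hi'. lo' 0 = hi' 0 \<and> (\<forall>i. 0 < i \<and> i < k \<longrightarrow> lo' i < hi' i) \<and>
      rbox k (lo p) (hi p) \<inter> rbox k (lo q) (hi q) = rbox k lo' hi'"
    unfolding rbox_Int using flat overlap[OF pq \<open>R p q\<close>] pos pq by (intro exI conjI allI impI) auto
qed

lemma cbu_rep_imp_box_rep:
  assumes "cbu_rep k V E lo hi"
  shows "box_rep k V E lo hi"
  unfolding box_rep_def
proof (intro conjI ballI allI impI)
  fix v i assume "v \<in> V" "i < k"
  then show "lo v i \<le> hi v i" using assms unfolding cbu_rep_def by (meson less_imp_le)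
next
  fix u v assume "u \<in> V" "v \<in> V" "u \<noteq> v"
  then show "E u v \<longleftrightarrow> rbox k (lo u) (hi u) \<inter> rbox k (lo v) (hi v) \<noteq> {}"
    using assms unfolding cbu_rep_def by blast
qed

lemma ext_V_simps [simp]:
  "Old v \<in> ext_V V \<longleftrightarrow> v \<in> V" "NX \<in> ext_V V" "NY \<in> ext_V V" "NZ \<in> ext_V V"
  by (auto simp: ext_V_def)

lemma ext_E_simps [simp]:
  "ext_E X Y E (Old u) (Old v) \<longleftrightarrow> E u v"
  "ext_E X Y E NX (Old v) \<longleftrightarrow> v \<in> X" "ext_E X Y E (Old v) NX \<longleftrightarrow> v \<in> X"
  "ext_E X Y E NY (Old v) \<longleftrightarrow> v \<in> Y" "ext_E X Y E (Old v) NY \<longleftrightarrow> v \<in> Y"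
  "\<not> ext_E X Y E NZ (Old v)" "\<not> ext_E X Y E (Old v) NZ"
  "ext_E X Y E NX NZ" "ext_E X Y E NZ NX" "ext_E X Y E NY NZ" "ext_E X Y E NZ NY"
  "\<not> ext_E X Y E NX NY" "\<not> ext_E X Y E NY NX"
  by (auto simp: ext_E_def doubleton_eq_iff)

lemma box_rep_ext_Old:
  assumes "box_rep k (ext_V V) (ext_E X Y E) lo hi"
  shows "box_rep k V E (\<lambda>v. lo (Old v)) (\<lambda>v. hi (Old v))"
  unfolding box_rep_def
proof (intro conjI ballI allI impI)
  fix v i assume "v \<in> V" "i < k"
  then show "lo (Old v) i \<le> hi (Old v) i" using assms unfolding box_rep_def by (meson ext_V_simps(1))
next
  fix u v assume "u \<in> V" "v \<in> V" "u \<noteq> v"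
  then have "Old u \<in> ext_V V" "Old v \<in> ext_V V" "Old u \<noteq> Old v" by simp_all
  then show "E u v \<longleftrightarrow> rbox k (lo (Old u)) (hi (Old u)) \<inter> rbox k (lo (Old v)) (hi (Old v)) \<noteq> {}"
    using assms unfolding box_rep_def by (metis ext_E_simps(1))
qed

(* The old boxes lie in (-2, 2) in coordinates 1 to d; in coordinate 1, z is lifted above them. *)
fun ext_lo :: "'a set \<Rightarrow> ('a \<Rightarrow> nat \<Rightarrow> real) \<Rightarrow> 'a ext \<Rightarrow> nat \<Rightarrow> real" where
  "ext_lo X L (Old v) i = (if i = 0 then (if v \<in> X then 0 else 1) else L v (i - 1))"
| "ext_lo X L NX i = (if i = 0 then -1 else -3)"
| "ext_lo X L NY i = (if i = 0 then 2 else -3)"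
| "ext_lo X L NZ i = (if i = 0 then 0 else if i = 1 then 2 else -3)"

fun ext_hi :: "'a set \<Rightarrow> ('a \<Rightarrow> nat \<Rightarrow> real) \<Rightarrow> 'a ext \<Rightarrow> nat \<Rightarrow> real" where
  "ext_hi X H (Old v) i = (if i = 0 then (if v \<in> X then 1 else 2) else H v (i - 1))"
| "ext_hi X H NX i = (if i = 0 then 0 else 3)"
| "ext_hi X H NY i = 3"
| "ext_hi X H NZ i = (if i = 0 then 2 else 3)"

lemma CBU_ext_if_strict_box_rep:
  assumes g: "graph V E" and bp: "bipartite_parts V E X Y" and "1 \<le> d"
    and rep: "strict_box_rep d V E L H" and bnd: "\<And>v i. L v i \<in> {-2<..<2} \<and> H v i \<in> {-2<..<2}"
  shows "CBU (d + 1) (ext_V V) (ext_E X Y E)"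
proof -
  have XY: "X \<union> Y = V" "X \<inter> Y = {}" and EXY: "\<And>u v. E u v \<Longrightarrow> (u \<in> X \<and> v \<in> Y) \<or> (u \<in> Y \<and> v \<in> X)"
    using bp unfolding bipartite_parts_def by blast+
  have Esym: "\<And>u v. E u v \<Longrightarrow> E v u" using g unfolding graph_def by blast
  have pos: "\<And>v i. v \<in> V \<Longrightarrow> i < d \<Longrightarrow> L v i < H v i"
    and adj: "\<And>u v i. u \<in> V \<Longrightarrow> v \<in> V \<Longrightarrow> u \<noteq> v \<Longrightarrow> E u v \<Longrightarrow> i < d \<Longrightarrow> L u i < H v i"
    and nadj: "\<And>u v. u \<in> V \<Longrightarrow> v \<in> V \<Longrightarrow> u \<noteq> v \<Longrightarrow> \<not> E u v \<Longrightarrow> \<exists>i<d. H u i < L v i \<or> H v i < L u i"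
    using rep unfolding strict_box_rep_def by blast+
  have bounds: "L v i < 3" "-3 < H v i" "H v i < 2" for v i
    using bnd[of v i] by auto
  have "cbu_rep (d + 1) (ext_V V) (ext_E X Y E) (ext_lo X L) (ext_hi X H)"
  proof (rule cbu_repI)
    fix p i assume "p \<in> ext_V V" "i < d + 1"
    then show "ext_lo X L p i < ext_hi X H p i"
      using pos by (cases p) auto
  next
    fix p q assume "p \<in> ext_V V" "q \<in> ext_V V" "p \<noteq> q" "\<not> ext_E X Y E p q"
    then have "(\<exists>i\<in>{0, 1}. ext_hi X H p i < ext_lo X L q i \<or> ext_hi X H q i < ext_lo X L p i) \<or>
      (\<exists>j<d. ext_hi X H p (Suc j) < ext_lo X L q (Suc j) \<or> ext_hi X H q (Suc j) < ext_lo X L p (Suc j))"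
      using nadj XY by (cases p; cases q) (auto simp: bounds)
    then show "\<exists>i<d + 1. ext_hi X H p i < ext_lo X L q i \<or> ext_hi X H q i < ext_lo X L p i"
      using \<open>1 \<le> d\<close> by force
  next
    fix p q assume "p \<in> ext_V V" "q \<in> ext_V V" "p \<noteq> q" "ext_E X Y E p q"
    then show "ext_hi X H p 0 = ext_lo X L q 0 \<or> ext_hi X H q 0 = ext_lo X L p 0"
      using XY EXY by (cases p; cases q) auto
  next
    fix p q i assume "p \<in> ext_V V" "q \<in> ext_V V" "p \<noteq> q" "ext_E X Y E p q" "0 < i" "i < d + 1"
    then show "ext_lo X L p i < ext_hi X H q i \<and> ext_lo X L q i < ext_hi X H p i"
      using adj Esym by (cases p; cases q) (auto simp: bounds)
  qed simp
  then show ?thesis unfolding CBU_iff_cbu_rep by blast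
qed

(* [lw, rw] is sandwiched between the touching intervals [lv, rv] and [lu, ru]; [lx, rx] touches
   [lw, rw], while [ly, ry] touches both [lu, ru] and [lv, rv].  This forces [ly, ry] = [lw, rw],
   and then no interval [lz, rz] can touch both [lx, rx] and [ly, ry]. *)
lemma touching_path_no_sandwich:
  fixes lw rw lu ru lv rv lx rx ly ry lz rz :: real
  assumes "lw < rw" "lu < ru" "lv < rv" "lx < rx" "ly < ry" "lz < rz"
    and "rw = lu" "rv = lw"
    and "rw = lx \<or> rx = lw" "ru = ly \<or> ry = lu" "rv = ly \<or> ry = lv"
    and "rx = lz \<or> rz = lx" "ry = lz \<or> rz = ly"
  shows False
proof -
  have "ly = lw" "ry = rw" using assms(1-3,5,7,8,10,11) by auto
  then show False using assms by auto
qed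

lemma touching_intervals_common_point:
  fixes l r :: "'a \<Rightarrow> real"
  assumes g: "graph V E" and conn: "connected_graph V E"
    and lr: "\<And>w. w \<in> V \<Longrightarrow> l w < r w"
    and touch: "\<And>u v. E u v \<Longrightarrow> r u = l v \<or> r v = l u"
    and no_sandwich: "\<And>w u v. E w u \<Longrightarrow> E w v \<Longrightarrow> r w = l u \<Longrightarrow> r v = l w \<Longrightarrow> False"
  shows "\<exists>\<gamma>. \<forall>w\<in>V. l w \<le> \<gamma> \<and> \<gamma> \<le> r w"
proof -
  have Esym: "\<And>u v. E u v \<Longrightarrow> E v u" using g unfolding graph_def by blast
  \<comment> \<open>the endpoint at which w touches its neighbours; by no_sandwich it is the same for all of them\<close>
  define p where "p w = (if \<exists>u. E w u \<and> r w = l u then r w else l w)" for w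
  have p_oriented: "p u = p v" if "E u v" "r u = l v" for u v
  proof -
    have "p u = r u" using that unfolding p_def by auto
    moreover have "p v = l v" using no_sandwich[of v _ u] Esym that unfolding p_def by auto
    ultimately show ?thesis using that by simp
  qed
  have p_edge: "p u = p v" if "E u v" for u v
    using touch[OF that] p_oriented[OF that] p_oriented[OF Esym[OF that]] by metis
  obtain u0 where "u0 \<in> V" using conn unfolding connected_graph_def by blast
  have "p w = p u0" if "w \<in> V" for w
  proof -
    have "E\<^sup>*\<^sup>* u0 w" using conn \<open>u0 \<in> V\<close> that unfolding connected_graph_def by blast
    then show ?thesis by induction (simp_all add: p_edge)
  qed
  moreover have "l w \<le> p w \<and> p w \<le> r w" if "w \<in> V" for w
    using lr[OF that] unfolding p_def by auto
  ultimately show ?thesis by metis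
qed

lemma cbu_rep_ext_no_sandwich:
  assumes rep: "cbu_rep (Suc d) (ext_V V) (ext_E X Y E) lo hi"
    and g: "graph V E" and bp: "bipartite_parts V E X Y"
    and wu: "E w u" and wv: "E w v"
    and sandwich: "hi (Old w) 0 = lo (Old u) 0" "hi (Old v) 0 = lo (Old w) 0"
  shows False
proof -
  have touch: "hi p 0 = lo q 0 \<or> hi q 0 = lo p 0"
    if "p \<in> ext_V V" "q \<in> ext_V V" "p \<noteq> q" "ext_E X Y E p q" for p q
    using cbu_rep_touch_0[OF rep _ that] by simp
  have pos: "lo p 0 < hi p 0" if "p \<in> ext_V V" for p
    using rep that unfolding cbu_rep_def by (meson zero_less_Suc)
  have XY: "X \<inter> Y = {}" and EXY: "\<And>u v. E u v \<Longrightarrow> (u \<in> X \<and> v \<in> Y) \<or> (u \<in> Y \<and> v \<in> X)"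
    using bp unfolding bipartite_parts_def by blast+
  have V: "w \<in> V" "u \<in> V" "v \<in> V"
    using g wu wv unfolding graph_def by blast+
  have touch_old: "hi (Old t) 0 = lo P 0 \<or> hi P 0 = lo (Old t) 0"
    if "t \<in> V" "ext_E X Y E (Old t) P" "P \<in> {NX, NY}" for t P
    using touch[of "Old t" P] that by auto
  have touch_z: "hi NX 0 = lo NZ 0 \<or> hi NZ 0 = lo NX 0" "hi NY 0 = lo NZ 0 \<or> hi NZ 0 = lo NY 0"
    using touch by simp_all
  consider "w \<in> X" "u \<in> Y" "v \<in> Y" | "w \<in> Y" "u \<in> X" "v \<in> X"
    using EXY[OF wu] EXY[OF wv] XY by blast
  then show False
  proof cases
    case 1
    show False
      by (rule touching_path_no_sandwich[OF pos pos pos pos pos pos sandwich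
            touch_old touch_old touch_old touch_z(1) touch_z(2)])
        (use V 1 in auto)
  next
    case 2
    show False
      by (rule touching_path_no_sandwich[OF pos pos pos pos pos pos sandwich
            touch_old touch_old touch_old touch_z(2) touch_z(1)])
        (use V 2 XY in auto)
  qed
qed

lemma box_rep_if_CBU_ext:
  assumes g: "graph V E" and conn: "connected_graph V E" and bp: "bipartite_parts V E X Y"
    and "CBU (Suc d) (ext_V V) (ext_E X Y E)"
  shows "\<exists>lo hi. box_rep d V E lo hi"
proof -
  obtain lo hi where rep: "cbu_rep (Suc d) (ext_V V) (ext_E X Y E) lo hi"
    using assms(4) unfolding CBU_iff_cbu_rep by blast
  have "\<exists>\<gamma>. \<forall>w\<in>V. lo (Old w) 0 \<le> \<gamma> \<and> \<gamma> \<le> hi (Old w) 0"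
  proof (rule touching_intervals_common_point[OF g conn])
    show "lo (Old w) 0 < hi (Old w) 0" if "w \<in> V" for w
      using rep that unfolding cbu_rep_def by (meson ext_V_simps(1) zero_less_Suc)
    show "hi (Old u) 0 = lo (Old v) 0 \<or> hi (Old v) 0 = lo (Old u) 0" if "E u v" for u v
      using cbu_rep_touch_0[OF rep, of "Old u" "Old v"] g that unfolding graph_def by simp
    show False if "E w u" "E w v" "hi (Old w) 0 = lo (Old u) 0" "hi (Old v) 0 = lo (Old w) 0" for w u v
      using cbu_rep_ext_no_sandwich[OF rep g bp that] .
  qed
  then obtain \<gamma> where "\<forall>w\<in>V. lo (Old w) 0 \<le> \<gamma> \<and> \<gamma> \<le> hi (Old w) 0" by blast
  with box_rep_ext_Old[OF cbu_rep_imp_box_rep[OF rep]] show ?thesis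
    by (blast intro: box_rep_drop_coord_0)
qed

theorem mainTheorem8:
  fixes V X Y :: "'a set" and E :: "'a \<Rightarrow> 'a \<Rightarrow> bool" and d :: nat
  assumes "finite V" and "graph V E" and "connected_graph V E"
    and "bipartite_parts V E X Y" and "d \<ge> 1"
  shows "boxicity V E \<le> d \<longleftrightarrow> CBU (d + 1) (ext_V V) (ext_E X Y E)"
proof
  assume "boxicity V E \<le> d"
  have "\<exists>lo hi. box_rep (boxicity V E) V E lo hi"
    unfolding boxicity_def by (rule LeastI_ex) (use ex_box_rep_card[OF assms(1,2)] in blast)
  then obtain lo hi where "box_rep d V E lo hi"
    using box_rep_pad \<open>boxicity V E \<le> d\<close> by blast
  then obtain lo hi where "strict_box_rep d V E lo hi"
    using strict_box_rep_if_box_rep \<open>finite V\<close> by blast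
  then obtain lo hi where "strict_box_rep d V E lo hi" "\<forall>v i. lo v i \<in> {-2<..<2} \<and> hi v i \<in> {-2<..<2}"
    using strict_box_rep_bounded by blast
  then show "CBU (d + 1) (ext_V V) (ext_E X Y E)"
    using CBU_ext_if_strict_box_rep assms(2,4,5) by blast
next
  assume "CBU (d + 1) (ext_V V) (ext_E X Y E)"
  then have "\<exists>lo hi. box_rep d V E lo hi"
    using box_rep_if_CBU_ext assms(2,3,4) by simp
  then show "boxicity V E \<le> d" unfolding boxicity_def by (rule Least_le)
qed

end
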